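(* Let $G=(V,E)$ be a finite graph with adjacency matrix $A$, and let $\eta:V\to\mathbb Z$ be a labeling. Let $\ell$ and $b$ be the numbers of level and bad vertices respectively. For $j\in\mathbb Z$ let $L_j$ be the set of level vertices with label $j$. If $\lambda$ is an eigenvalue of $A$ of multiplicity $m$, and $\ell_j$ denotes the multiplicity of $\lambda$ as an eigenvalue of the adjacency matrix of the subgraph induced by $L_j$ (with $\ell_j=0$ if it is not an eigenvalue), then $$m\le b+\sum_j\ell_j.$$ Consequently, for the multiplicities $m_1,\dots,m_k$ of any $k$ distinct eigenvalues of $A$, $m_1+\dots+m_k\le kb+\ell$.
   Context: Given a graph $G=(V,E)$ and a labeling $\eta:V\to\mathbb Z$, a vertex $v$ is called: (i) prodigy if it has a neighbour $w$ with $\eta(w)<\eta(v)$ such that all other neighbours of $w$ (other than $v$) have label less than $\eta(v)$; (ii) level if it is not prodigy and all of its neighbours have label $\le\eta(v)$; (iii) bad if it is neither prodigy nor level. *)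

theory Defs
  imports "Jordan_Normal_Form.Char_Poly"
begin

text \<open>A finite simple graph on the vertex set {0..<n}, given by an edge relation E
  (assumed symmetric and irreflexive in the theorem); a labeling eta of vertices by integers.\<close>

definition adj_mat :: "nat \<Rightarrow> (nat \<Rightarrow> nat \<Rightarrow> bool) \<Rightarrow> real mat" where
  "adj_mat n E = mat n n (\<lambda>(i, j). if E i j then 1 else 0)"

definition induced_adj_mat :: "(nat \<Rightarrow> nat \<Rightarrow> bool) \<Rightarrow> nat set \<Rightarrow> real mat" where
  "induced_adj_mat E S = (let s = sorted_list_of_set S in
     mat (length s) (length s) (\<lambda>(i, j). if E (s ! i) (s ! j) then 1 else 0))"

text \<open>Multiplicity of lambda as an eigenvalue (multiplicity as a root of the
  characteristic polynomial; 0 if lambda is not an eigenvalue).\<close>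
definition eig_mult :: "real mat \<Rightarrow> real \<Rightarrow> nat" where
  "eig_mult A lam = order lam (char_poly A)"

definition prodigy :: "nat \<Rightarrow> (nat \<Rightarrow> nat \<Rightarrow> bool) \<Rightarrow> (nat \<Rightarrow> int) \<Rightarrow> nat \<Rightarrow> bool" where
  "prodigy n E eta v \<longleftrightarrow> (\<exists>w<n. E v w \<and> eta w < eta v \<and>
      (\<forall>u<n. E w u \<and> u \<noteq> v \<longrightarrow> eta u < eta v))"

definition level :: "nat \<Rightarrow> (nat \<Rightarrow> nat \<Rightarrow> bool) \<Rightarrow> (nat \<Rightarrow> int) \<Rightarrow> nat \<Rightarrow> bool" where
  "level n E eta v \<longleftrightarrow> \<not> prodigy n E eta v \<and> (\<forall>w<n. E v w \<longrightarrow> eta w \<le> eta v)"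

definition bad :: "nat \<Rightarrow> (nat \<Rightarrow> nat \<Rightarrow> bool) \<Rightarrow> (nat \<Rightarrow> int) \<Rightarrow> nat \<Rightarrow> bool" where
  "bad n E eta v \<longleftrightarrow> \<not> prodigy n E eta v \<and> \<not> level n E eta v"

definition level_class :: "nat \<Rightarrow> (nat \<Rightarrow> nat \<Rightarrow> bool) \<Rightarrow> (nat \<Rightarrow> int) \<Rightarrow> int \<Rightarrow> nat set" where
  "level_class n E eta j = {v. v < n \<and> level n E eta v \<and> eta v = j}"

end

theory Submission
  imports Defs
    "Jordan_Normal_Form.Jordan_Normal_Form_Uniqueness"
    "Jordan_Normal_Form.Jordan_Normal_Form_Existence"
    "Jordan_Normal_Form.DL_Rank"
begin

(* Let A be the adjacency matrix of a graph on {0..<n}, C = A - lam*I, and let L_j be the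
   level vertices with label j, with induced matrices A_j and C_j = A_j - lam*I.

   1. For a real symmetric matrix the algebraic multiplicity of an eigenvalue equals its
      geometric multiplicity: the characteristic polynomial splits over the reals (all complex
      eigenvalues are real), and ker C^2 = ker C forces all Jordan blocks to have size 1.
      Hence eig_mult A lam = dim ker C and eig_mult A_j lam = dim ker C_j.
   2. If every vector of ker C that is orthogonal to a finite family Ps is zero, then
      dim ker C <= |Ps|, since x |-> (p . x)_p is injective on ker C.
   3. Combinatorial core: an eigenvector x of A that vanishes on the bad vertices and whose
      restriction to each L_j is orthogonal to ker C_j is zero.  By induction on the label j:
      prodigy vertices of label j are forced to vanish by an equation at a lower neighbour,
      so on L_j the eigen-equation of A becomes that of A_j, and the restriction of x to L_j
      lies in ker C_j and is orthogonal to it.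
   4. Taking Ps = unit vectors of the bad vertices plus bases of all ker C_j (extended by
      zero) gives the first claim; summing it over the eigenvalues and using that the root
      multiplicities of the characteristic polynomial of A_j add up to at most |L_j| gives
      the second. *)

section \<open>Eigenvalue multiplicities of real symmetric matrices\<close>

lemma real_vec_self_scalar_prod_eq_0:
  fixes v :: "real vec"
  assumes "v \<in> carrier_vec n"
  shows "v \<bullet> v = 0 \<longleftrightarrow> v = 0\<^sub>v n"
  using conjugate_square_eq_0_vec[OF assms] by simp

text \<open>For a symmetric real matrix, \<open>C\<^sup>2 x = 0\<close> implies \<open>C x = 0\<close>, since
  \<open>(C x) \<bullet> (C x) = x \<bullet> (C\<^sup>2 x)\<close>.\<close>
lemma symmetric_kernel_square:
  fixes C :: "real mat"
  assumes C: "C \<in> carrier_mat n n" and sym: "transpose_mat C = C"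
    and x: "x \<in> carrier_vec n" and CCx: "C *\<^sub>v (C *\<^sub>v x) = 0\<^sub>v n"
  shows "C *\<^sub>v x = 0\<^sub>v n"
proof -
  have "(C *\<^sub>v x) \<bullet> (C *\<^sub>v x) = x \<bullet> (C *\<^sub>v (C *\<^sub>v x))"
    using transpose_vec_mult_scalar[OF C, of "C *\<^sub>v x" x] sym C x by simp
  also have "\<dots> = 0" using CCx x by simp
  finally show ?thesis using real_vec_self_scalar_prod_eq_0[of "C *\<^sub>v x" n] C x by simp
qed

lemma conjugate_of_real_mat_mult_vec:
  fixes M :: "real mat" and v :: "complex vec"
  assumes M: "M \<in> carrier_mat n n" and v: "v \<in> carrier_vec n"
  shows "conjugate (map_mat complex_of_real M *\<^sub>v v) = map_mat complex_of_real M *\<^sub>v conjugate v"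
  using M v by (intro eq_vecI) (auto simp: scalar_prod_def)

text \<open>Every complex eigenvalue of a real symmetric matrix is real: for an eigenvector \<open>v\<close>,
  \<open>a (v \<bullet>c v) = (M v) \<bullet>c v = v \<bullet>c (M v) = cnj a (v \<bullet>c v)\<close>.\<close>
lemma symmetric_eigenvalue_real:
  fixes M :: "real mat"
  assumes M: "M \<in> carrier_mat n n" and sym: "transpose_mat M = M"
    and ev: "eigenvalue (map_mat complex_of_real M) a"
  shows "cnj a = a"
proof -
  let ?M = "map_mat complex_of_real M"
  have M': "?M \<in> carrier_mat n n" and sym': "transpose_mat ?M = ?M"
    using M sym by (auto simp: map_mat_transpose)
  obtain v where v: "v \<in> carrier_vec n" "v \<noteq> 0\<^sub>v n" and Mv: "?M *\<^sub>v v = a \<cdot>\<^sub>v v"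
    using ev M' unfolding eigenvalue_def eigenvector_def by blast
  have "a * (v \<bullet>c v) = (?M *\<^sub>v v) \<bullet>c v"
    using v Mv by simp
  also have "\<dots> = v \<bullet> (?M *\<^sub>v conjugate v)"
    using transpose_vec_mult_scalar[OF M', of "conjugate v" v] sym' v by simp
  also have "?M *\<^sub>v conjugate v = cnj a \<cdot>\<^sub>v conjugate v"
    using conjugate_of_real_mat_mult_vec[OF M v(1)] Mv conjugate_smult_vec[of a v] by simp
  also have "v \<bullet> (cnj a \<cdot>\<^sub>v conjugate v) = cnj a * (v \<bullet>c v)"
    using v by simp
  finally show ?thesis using v conjugate_square_eq_0_vec[OF v(1)] by simp
qed

interpretation of_real_poly_hom: map_poly_inj_idom_hom "of_real :: real \<Rightarrow> complex" ..

text \<open>Hence the characteristic polynomial of a real symmetric matrix splits into real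
  linear factors, which is what the existence of a real Jordan normal form requires.\<close>
lemma symmetric_char_poly_splits:
  fixes M :: "real mat"
  assumes M: "M \<in> carrier_mat n n" and sym: "transpose_mat M = M"
  shows "\<exists>as. char_poly M = (\<Prod>a\<leftarrow>as. [:- a, 1:])"
proof -
  let ?M = "map_mat complex_of_real M"
  obtain cs where cs: "char_poly ?M = (\<Prod>c\<leftarrow>cs. [:- c, 1:])"
    using char_poly_factorized[of ?M n] M by auto
  have real: "complex_of_real (Re c) = c" if "c \<in> set cs" for c
  proof -
    have "poly (char_poly ?M) c = 0" unfolding cs using that by (rule linear_poly_root)
    hence "eigenvalue ?M c" using eigenvalue_root_char_poly[of ?M n] M by simp
    thus ?thesis using symmetric_eigenvalue_real[OF M sym] by (simp add: complex_eq_iff)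
  qed
  have prod: "(\<Prod>c\<leftarrow>cs. [:- c, 1:]) = map_poly complex_of_real (\<Prod>a\<leftarrow>map Re cs. [:- a, 1:])"
    using real
  proof (induction cs)
    case (Cons c cs)
    have "[:- c, 1:] = map_poly complex_of_real [:- Re c, 1:]" using Cons.prems[of c] by simp
    with Cons show ?case by (simp only: list.map prod_list.Cons of_real_poly_hom.hom_mult) simp
  qed simp
  have "map_poly complex_of_real (char_poly M) = map_poly complex_of_real (\<Prod>a\<leftarrow>map Re cs. [:- a, 1:])"
    by (metis of_real_hom.char_poly_hom[OF M] cs prod)
  thus ?thesis by (metis of_real_poly_hom.eq_iff)
qed

lemma kernel_dim_cong:
  assumes "dim_col A = dim_col B" and "mat_kernel A = mat_kernel B"
  shows "kernel_dim A = kernel_dim B"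
  using assms unfolding kernel_dim_def by simp

text \<open>If the Jordan blocks of an eigenvalue (sizes \<open>ks\<close>) span generalised eigenspaces of equal
  dimension for exponents 1 and 2, then all blocks have size 1.\<close>
lemma sum_list_min_two_eq_min_one:
  fixes ks :: "nat list"
  assumes "0 \<notin> set ks" and "(\<Sum>k\<leftarrow>ks. min 2 k) = (\<Sum>k\<leftarrow>ks. min 1 k)"
  shows "sum_list ks = (\<Sum>k\<leftarrow>ks. min 1 k)"
  using assms
proof (induction ks)
  case (Cons k ks)
  have "(\<Sum>k\<leftarrow>ks. min 1 k) \<le> (\<Sum>k\<leftarrow>ks. min (2::nat) k)"
    by (rule sum_list_mono) simp
  with Cons.prems have "min 2 k = min 1 k" and "(\<Sum>k\<leftarrow>ks. min 2 k) = (\<Sum>k\<leftarrow>ks. min 1 k)"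
    by auto
  with Cons show ?case by (auto simp: min_def split: if_splits)
qed simp

lemma symmetric_order_eq_kernel_dim:
  fixes M :: "real mat"
  assumes M: "M \<in> carrier_mat n n" and sym: "transpose_mat M = M"
  shows "Polynomial.order lam (char_poly M) = kernel_dim (char_matrix M lam)"
proof -
  obtain as where "char_poly M = (\<Prod>a\<leftarrow>as. [:- a, 1:])"
    using symmetric_char_poly_splits[OF M sym] by blast
  then obtain n_as where jnf: "jordan_nf M n_as" using jordan_nf_exists[OF M] by blast
  define ks where "ks = map fst [(k, e)\<leftarrow>n_as. e = lam]"
  have "map fst (filter (\<lambda>ke. snd ke = lam) n_as) = ks" unfolding ks_def by (induction n_as) auto
  hence order: "Polynomial.order lam (char_poly M) = sum_list ks"
    using jordan_nf_order[OF jnf, of lam] by simp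
  have blocks: "dim_gen_eigenspace M lam k = (\<Sum>b\<leftarrow>ks. min k b)" for k
    unfolding ks_def by (rule dim_gen_eigenspace[OF jnf])
  have pos: "0 \<notin> set ks" using jnf unfolding jordan_nf_def ks_def by force
  define C where "C = char_matrix M lam"
  have C: "C \<in> carrier_mat n n" unfolding C_def using M by simp
  have symC: "transpose_mat C = C"
  proof -
    have "transpose_mat ((- lam) \<cdot>\<^sub>m 1\<^sub>m n) = (- lam) \<cdot>\<^sub>m 1\<^sub>m n" by (intro eq_matI) auto
    thus ?thesis using M sym unfolding C_def char_matrix_def by (simp add: transpose_add)
  qed
  have pow1: "C ^\<^sub>m 1 = C" and pow2: "C ^\<^sub>m 2 = C * C"
    using C by (simp_all add: numeral_2_eq_2)
  have "mat_kernel (C * C) = mat_kernel C"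
    using C symmetric_kernel_square[OF C symC] by (auto simp: mat_kernel_def)
  hence "dim_gen_eigenspace M lam 2 = dim_gen_eigenspace M lam 1"
    unfolding dim_gen_eigenspace_def C_def[symmetric] pow1 pow2 using C
    by (intro kernel_dim_cong) auto
  hence "sum_list ks = dim_gen_eigenspace M lam 1"
    using sum_list_min_two_eq_min_one[OF pos] unfolding blocks by simp
  also have "\<dots> = kernel_dim C" unfolding dim_gen_eigenspace_def C_def[symmetric] pow1 ..
  finally show ?thesis unfolding order C_def .
qed

section \<open>Bounding kernel dimensions by separating families\<close>

text \<open>A matrix \<open>P\<close> with \<open>N\<close> rows that is injective on \<open>ker C\<close> embeds it into an
  \<open>N\<close>-dimensional space (rank--nullity applied to \<open>x \<mapsto> P x\<close> onto its image).\<close>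
lemma kernel_dim_le_if_injective:
  fixes C P :: "'a :: field mat"
  assumes C: "C \<in> carrier_mat r n" and P: "P \<in> carrier_mat N n"
    and inj: "inj_on ((*\<^sub>v) P) (mat_kernel C)"
  shows "kernel_dim C \<le> N"
proof -
  interpret K: kernel r n C by unfold_locales (rule C)
  interpret W: vec_space "TYPE('a)" N .
  have in_kernel: "x \<in> carrier_vec n" if "x \<in> mat_kernel C" for x
    using that mat_kernel_carrier[OF C] by blast
  have hom: "(*\<^sub>v) P \<in> module_hom class_ring K.VK W.V"
    using in_kernel P
    by (auto simp: module_hom_def module_vec_simps mult_add_distrib_mat_vec[OF P] mult_mat_vec[OF P])
  have "linear_map class_ring K.VK W.V ((*\<^sub>v) P)"
    by unfold_locales (rule hom)
  then interpret L: linear_map class_ring K.VK W.V "(*\<^sub>v) P" .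
  have sub: "subspace class_ring L.imT W.V" by (rule L.imT_is_subspace)
  have vs_im: "vectorspace class_ring (W.vs L.imT)" by (rule W.subspace_is_vs[OF sub])
  have "linear_map class_ring K.VK (W.vs L.imT) ((*\<^sub>v) P)"
  proof (intro linear_map.intro mod_hom.intro mod_hom_axioms.intro)
    show "vectorspace class_ring K.VK" by unfold_locales
    show "vectorspace class_ring (W.vs L.imT)" by (rule vs_im)
    show "module class_ring K.VK" by unfold_locales
    show "module class_ring (W.vs L.imT)" using vs_im by (simp add: vectorspace_def)
    show "(*\<^sub>v) P \<in> module_hom class_ring K.VK (W.vs L.imT)"
      using hom unfolding module_hom_def by (simp add: L.im_def)
  qed
  then interpret LI: linear_map class_ring K.VK "W.vs L.imT" "(*\<^sub>v) P" .
  have onto: "(*\<^sub>v) P ` carrier K.VK = carrier (W.vs L.imT)" by (simp add: L.im_def)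
  obtain B where "finite B" "K.basis B" using kernel_basis_exists[OF C] by blast
  hence fin: "K.Ker.fin_dim" unfolding K.Ker.fin_dim_def K.Ker.basis_def by blast
  have "kernel_dim C = vectorspace.dim class_ring (W.vs L.imT)"
    using LI.dim_eq[OF fin] inj onto by simp
  also have "\<dots> \<le> W.dim" using W.subspace_dim[OF sub W.fin_dim LI.surj_fin_dim[OF fin onto]] .
  finally show ?thesis by (simp add: W.dim_is_n)
qed

text \<open>If the only vector of \<open>ker C\<close> orthogonal to every member of a finite family \<open>Ps\<close> is zero,
  then \<open>dim ker C \<le> |Ps|\<close>: apply the previous lemma to the matrix with rows \<open>Ps\<close>.\<close>
lemma kernel_dim_le_separating:
  fixes C :: "'a :: field mat"
  assumes C: "C \<in> carrier_mat r n" and fin: "finite Ps" and Ps: "Ps \<subseteq> carrier_vec n"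
    and separates: "\<And>x. x \<in> mat_kernel C \<Longrightarrow> \<forall>p\<in>Ps. p \<bullet> x = 0 \<Longrightarrow> x = 0\<^sub>v n"
  shows "kernel_dim C \<le> card Ps"
proof -
  obtain ps where ps: "set ps = Ps" "distinct ps" using finite_distinct_list[OF fin] by blast
  let ?P = "mat_of_rows n ps"
  have "kernel_dim C \<le> length ps"
  proof (rule kernel_dim_le_if_injective[OF C])
    show "?P \<in> carrier_mat (length ps) n" by simp
    show "inj_on ((*\<^sub>v) ?P) (mat_kernel C)"
    proof (rule inj_onI)
      fix x y assume x: "x \<in> mat_kernel C" and y: "y \<in> mat_kernel C" and eq: "?P *\<^sub>v x = ?P *\<^sub>v y"
      have xc: "x \<in> carrier_vec n" and yc: "y \<in> carrier_vec n"
        using x y mat_kernel_carrier[OF C] by auto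
      have "C *\<^sub>v (x - y) = C *\<^sub>v x - C *\<^sub>v y" using C xc yc by (simp add: mult_minus_distrib_mat_vec)
      hence "x - y \<in> mat_kernel C" using x y xc yc C by (auto simp: mat_kernel_def)
      moreover have "\<forall>p\<in>Ps. p \<bullet> (x - y) = 0"
      proof
        fix p assume "p \<in> Ps"
        then obtain i where i: "i < length ps" "p = ps ! i" using ps(1) by (metis in_set_conv_nth)
        have pc: "p \<in> carrier_vec n" using \<open>p \<in> Ps\<close> Ps by auto
        have "row ?P i \<bullet> x = row ?P i \<bullet> y" using arg_cong[OF eq, of "\<lambda>v. v $ i"] i by simp
        hence "p \<bullet> x = p \<bullet> y" using i pc by simp
        thus "p \<bullet> (x - y) = 0" using scalar_prod_minus_distrib[OF pc xc yc] by simp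
      qed
      ultimately have zero: "x - y = 0\<^sub>v n" by (rule separates)
      show "x = y"
      proof (rule eq_vecI)
        fix i assume "i < dim_vec y"
        thus "x $ i = y $ i" using arg_cong[OF zero, of "\<lambda>v. v $ i"] xc yc by simp
      qed (use xc yc in simp)
    qed
  qed
  thus ?thesis using distinct_card[OF ps(2)] ps(1) by simp
qed

lemma orthogonal_to_kernel_basis:
  fixes C :: "real mat"
  assumes C: "C \<in> carrier_mat r k" and B: "kernel.basis k C B"
    and y: "y \<in> mat_kernel C" and orth: "\<forall>w\<in>B. w \<bullet> y = 0"
  shows "y = 0\<^sub>v k"
proof -
  interpret K: kernel r k C by unfold_locales (rule C)
  have B_ker: "B \<subseteq> mat_kernel C" and span: "K.span B = mat_kernel C"
    using B unfolding K.Ker.basis_def by auto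
  have Bc: "B \<subseteq> carrier_vec k" and yc: "y \<in> carrier_vec k"
    using B_ker y mat_kernel_carrier[OF C] by auto
  have "y \<bullet> w = 0" if "w \<in> B" for w
    using orth that comm_scalar_prod[OF yc, of w] Bc by auto
  hence "y \<in> K.NC.orthogonal_complement B"
    using yc unfolding K.NC.orthogonal_complement_def by blast
  hence "y \<in> K.NC.orthogonal_complement (K.NC.span B)"
    using K.NC.in_orthogonal_complement_span[OF Bc] by simp
  moreover have "y \<in> K.NC.span B" using y span K.span_same[OF B_ker] by simp
  ultimately have "y \<bullet> y = 0" unfolding K.NC.orthogonal_complement_def by blast
  thus ?thesis using real_vec_self_scalar_prod_eq_0[OF yc] by blast
qed

section \<open>Adjacency matrices of induced subgraphs\<close>

definition eigen_on :: "(nat \<Rightarrow> nat \<Rightarrow> bool) \<Rightarrow> nat set \<Rightarrow> real \<Rightarrow> (nat \<Rightarrow> real) \<Rightarrow> bool" where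
  "eigen_on E S lam f \<longleftrightarrow> (\<forall>v\<in>S. (\<Sum>u | u \<in> S \<and> E v u. f u) = lam * f v)"

definition restrict_vec :: "nat set \<Rightarrow> 'a vec \<Rightarrow> 'a vec" where
  "restrict_vec S x = vec (card S) (\<lambda>i. x $ (sorted_list_of_set S ! i))"

definition extend_vec :: "nat \<Rightarrow> nat set \<Rightarrow> 'a :: comm_monoid_add vec \<Rightarrow> 'a vec" where
  "extend_vec n S w = vec n (\<lambda>u. \<Sum>i<card S. if sorted_list_of_set S ! i = u then w $ i else 0)"

lemma restrict_vec_index [simp]:
  "dim_vec (restrict_vec S x) = card S"
  "i < card S \<Longrightarrow> restrict_vec S x $ i = x $ (sorted_list_of_set S ! i)"
  unfolding restrict_vec_def by simp_all

lemma all_sorted_list_of_set: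
  assumes "finite S"
  shows "(\<forall>i<card S. P (sorted_list_of_set S ! i)) \<longleftrightarrow> (\<forall>v\<in>S. P v)"
  using all_set_conv_all_nth[of "sorted_list_of_set S" P] assms by simp

lemma sum_sorted_list_of_set:
  assumes "finite S"
  shows "(\<Sum>i<card S. g (sorted_list_of_set S ! i)) = sum g S"
proof -
  let ?s = "sorted_list_of_set S"
  have "sum g S = sum_list (map g ?s)"
    using sum_list_distinct_conv_sum_set[of ?s g] assms by simp
  also have "\<dots> = (\<Sum>i<length ?s. g (?s ! i))" by (simp add: sum_list_sum_nth atLeast0LessThan)
  finally show ?thesis using assms by simp
qed

lemma restrict_vec_eq_0_iff:
  assumes "finite S"
  shows "restrict_vec S x = 0\<^sub>v (card S) \<longleftrightarrow> (\<forall>v\<in>S. x $ v = 0)"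
  using all_sorted_list_of_set[OF assms, of "\<lambda>v. x $ v = 0"] by (auto simp: vec_eq_iff)

lemma extend_vec_scalar_prod:
  fixes w x :: "'a :: comm_semiring_0 vec"
  assumes S: "S \<subseteq> {..<n}" and w: "w \<in> carrier_vec (card S)" and x: "x \<in> carrier_vec n"
  shows "extend_vec n S w \<bullet> x = w \<bullet> restrict_vec S x"
proof -
  let ?s = "sorted_list_of_set S"
  have fin: "finite S" using S finite_subset by blast
  have s_lt: "?s ! i < n" if "i < card S" for i
    using that fin S nth_mem[of i ?s] by auto
  have "extend_vec n S w \<bullet> x = (\<Sum>u<n. \<Sum>i<card S. if ?s ! i = u then w $ i * x $ u else 0)"
    unfolding extend_vec_def scalar_prod_def using x
    by (auto simp: lessThan_atLeast0 sum_distrib_right intro!: sum.cong)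
  also have "\<dots> = (\<Sum>i<card S. \<Sum>u<n. if ?s ! i = u then w $ i * x $ u else 0)"
    by (rule sum.swap)
  also have "\<dots> = (\<Sum>i<card S. w $ i * x $ (?s ! i))"
    using s_lt by (intro sum.cong) auto
  also have "\<dots> = w \<bullet> restrict_vec S x"
    unfolding restrict_vec_def scalar_prod_def using w by (auto simp: lessThan_atLeast0)
  finally show ?thesis .
qed

lemma mult_mat_vec_index_sum:
  assumes "A \<in> carrier_mat nr nc" and "v \<in> carrier_vec nc" and "i < nr"
  shows "(A *\<^sub>v v) $ i = (\<Sum>j<nc. A $$ (i, j) * v $ j)"
  using assms by (auto simp: scalar_prod_def lessThan_atLeast0 intro!: sum.cong)

lemma char_matrix_mult_vec:
  assumes A: "A \<in> carrier_mat n n" and v: "v \<in> carrier_vec n"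
  shows "char_matrix A e *\<^sub>v v = A *\<^sub>v v + (- e) \<cdot>\<^sub>v v"
  unfolding char_matrix_def using A v
  by (intro eq_vecI) (auto simp: add_scalar_prod_distrib[of _ n])

lemma induced_adj_mat_carrier: "finite S \<Longrightarrow> induced_adj_mat E S \<in> carrier_mat (card S) (card S)"
  unfolding induced_adj_mat_def Let_def by simp

lemma induced_adj_mat_index:
  "finite S \<Longrightarrow> i < card S \<Longrightarrow> j < card S \<Longrightarrow> induced_adj_mat E S $$ (i, j) =
    (if E (sorted_list_of_set S ! i) (sorted_list_of_set S ! j) then 1 else 0)"
  unfolding induced_adj_mat_def Let_def by simp

lemma induced_adj_mat_symmetric:
  assumes "finite S" and "\<And>u v. u \<in> S \<Longrightarrow> v \<in> S \<Longrightarrow> E u v = E v u"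
  shows "transpose_mat (induced_adj_mat E S) = induced_adj_mat E S"
proof -
  have M: "induced_adj_mat E S \<in> carrier_mat (card S) (card S)"
    by (rule induced_adj_mat_carrier[OF assms(1)])
  show ?thesis
    using M assms nth_mem[of _ "sorted_list_of_set S"]
    by (intro eq_matI) (auto simp: induced_adj_mat_index)
qed

text \<open>The whole graph is the subgraph induced by all vertices; this lets every statement about
  induced subgraphs be applied to the graph itself.\<close>
lemma adj_mat_as_induced: "adj_mat n E = induced_adj_mat E {..<n}"
  unfolding adj_mat_def induced_adj_mat_def Let_def lessThan_atLeast0 by (intro eq_matI) auto

lemma restrict_vec_all: "x \<in> carrier_vec n \<Longrightarrow> restrict_vec {..<n} x = x"
  unfolding restrict_vec_def lessThan_atLeast0 by (intro eq_vecI) auto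

lemma induced_mult_restrict_vec:
  assumes S: "finite S" and i: "i < card S"
  shows "(induced_adj_mat E S *\<^sub>v restrict_vec S x) $ i =
    (\<Sum>u | u \<in> S \<and> E (sorted_list_of_set S ! i) u. x $ u)"
proof -
  let ?s = "sorted_list_of_set S" and ?y = "restrict_vec S x"
  have "(induced_adj_mat E S *\<^sub>v ?y) $ i =
      (\<Sum>j<card S. if E (?s ! i) (?s ! j) then x $ (?s ! j) else 0)"
    using S i mult_mat_vec_index_sum[OF induced_adj_mat_carrier[OF S], of ?y i]
    by (auto simp: induced_adj_mat_index restrict_vec_def intro!: sum.cong)
  also have "\<dots> = (\<Sum>u\<in>S. if E (?s ! i) u then x $ u else 0)"
    by (rule sum_sorted_list_of_set[OF S])
  also have "\<dots> = (\<Sum>u | u \<in> S \<and> E (?s ! i) u. x $ u)"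
    using S by (simp add: sum.inter_filter[symmetric] conj_commute)
  finally show ?thesis .
qed

lemma restrict_vec_in_induced_kernel:
  assumes S: "finite S"
  shows "restrict_vec S x \<in> mat_kernel (char_matrix (induced_adj_mat E S) lam)
    \<longleftrightarrow> eigen_on E S lam (($) x)"
proof -
  let ?s = "sorted_list_of_set S" and ?y = "restrict_vec S x"
  have y: "?y \<in> carrier_vec (card S)" unfolding restrict_vec_def by simp
  have C: "char_matrix (induced_adj_mat E S) lam \<in> carrier_mat (card S) (card S)"
    using induced_adj_mat_carrier[OF S] by simp
  have entry: "(char_matrix (induced_adj_mat E S) lam *\<^sub>v ?y) $ i =
      (\<Sum>u | u \<in> S \<and> E (?s ! i) u. x $ u) - lam * x $ (?s ! i)" if "i < card S" for i
    using that y
    by (simp add: char_matrix_mult_vec[OF induced_adj_mat_carrier[OF S] y] induced_mult_restrict_vec[OF S that])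
  have "?y \<in> mat_kernel (char_matrix (induced_adj_mat E S) lam) \<longleftrightarrow>
      (\<forall>i<card S. (\<Sum>u | u \<in> S \<and> E (?s ! i) u. x $ u) = lam * x $ (?s ! i))"
    using C y entry by (auto simp: mat_kernel_def vec_eq_iff)
  also have "\<dots> \<longleftrightarrow> eigen_on E S lam (($) x)"
    unfolding eigen_on_def by (rule all_sorted_list_of_set[OF S])
  finally show ?thesis .
qed

lemma adj_mat_kernel_eigen_on:
  assumes "x \<in> mat_kernel (char_matrix (adj_mat n E) lam)"
  shows "x \<in> carrier_vec n" and "eigen_on E {..<n} lam (($) x)"
proof -
  show xc: "x \<in> carrier_vec n" using assms unfolding mat_kernel_def adj_mat_def char_matrix_def by simp
  show "eigen_on E {..<n} lam (($) x)"
    using assms restrict_vec_in_induced_kernel[of "{..<n}" x E lam]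
    unfolding adj_mat_as_induced restrict_vec_all[OF xc] by simp
qed

lemma eig_mult_induced_eq_kernel_dim:
  assumes S: "finite S" and sym: "\<And>u v. u \<in> S \<Longrightarrow> v \<in> S \<Longrightarrow> E u v = E v u"
  shows "eig_mult (induced_adj_mat E S) lam = kernel_dim (char_matrix (induced_adj_mat E S) lam)"
  unfolding eig_mult_def
  by (rule symmetric_order_eq_kernel_dim[OF induced_adj_mat_carrier[OF S] induced_adj_mat_symmetric[OF S sym]])

lemma level_class_subset: "level_class n E eta j \<subseteq> {..<n}"
  unfolding level_class_def by auto

lemma finite_level_class: "finite (level_class n E eta j)"
  using finite_subset[OF level_class_subset] by blast

section \<open>Eigenfunctions are determined by bad and level vertices\<close>

lemma label_induct:
  fixes eta :: "nat \<Rightarrow> int"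
  assumes step: "\<And>j. \<forall>u<n. eta u < j \<longrightarrow> P u \<Longrightarrow> \<forall>u<n. eta u = j \<longrightarrow> P u"
  shows "\<forall>v<n. P v"
proof (intro allI impI)
  define m where "m = Min (eta ` {..<n})"
  have low: "m \<le> eta u" if "u < n" for u using that unfolding m_def by simp
  fix v assume "v < n"
  thus "P v"
  proof (induction "nat (eta v - m)" arbitrary: v rule: less_induct)
    case less
    have "\<forall>u<n. eta u < eta v \<longrightarrow> P u"
    proof (intro allI impI)
      fix u assume u: "u < n" "eta u < eta v"
      hence "nat (eta u - m) < nat (eta v - m)" using low[OF u(1)] by simp
      thus "P u" using less.hyps u(1) by blast
    qed
    from step[OF this] less.prems show ?case by blast
  qed
qed

text \<open>If an eigenfunction vanishes below the label of a prodigy \<open>v\<close>, it vanishes at \<open>v\<close>: for the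
  witness \<open>w\<close> of \<open>v\<close>, the eigen-equation at \<open>w\<close> reads \<open>f v = lam * f w = 0\<close>, as all other
  neighbours of \<open>w\<close> have smaller labels.\<close>
lemma prodigy_vanishes:
  assumes sym: "\<And>u v. u < n \<Longrightarrow> v < n \<Longrightarrow> E u v = E v u"
    and eig: "eigen_on E {..<n} lam f"
    and v: "v < n" "prodigy n E eta v"
    and lower: "\<And>u. u < n \<Longrightarrow> eta u < eta v \<Longrightarrow> f u = 0"
  shows "f v = 0"
proof -
  obtain w where w: "w < n" "E v w" "eta w < eta v"
    and others: "\<And>u. u < n \<Longrightarrow> E w u \<Longrightarrow> u \<noteq> v \<Longrightarrow> eta u < eta v"
    using v(2) unfolding prodigy_def by blast
  let ?N = "{u. u \<in> {..<n} \<and> E w u}"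
  have "v \<in> ?N" using sym[OF w(1) v(1)] w(2) v(1) by simp
  hence "(\<Sum>u\<in>?N. f u) = f v + (\<Sum>u\<in>?N - {v}. f u)" by (simp add: sum.remove)
  also have "(\<Sum>u\<in>?N - {v}. f u) = 0" using others lower by (intro sum.neutral) auto
  finally have "f v = (\<Sum>u\<in>?N. f u)" by simp
  also have "\<dots> = lam * f w" using eig w(1) unfolding eigen_on_def by simp
  also have "\<dots> = 0" using lower[OF w(1,3)] by simp
  finally show ?thesis .
qed

text \<open>If an eigenfunction vanishes below label \<open>j\<close> and on all non-level vertices of label \<open>j\<close>,
  then on \<open>L\<^sub>j\<close> it satisfies the eigen-equation of the subgraph induced by \<open>L\<^sub>j\<close>: level vertices
  have no neighbours of larger label.\<close>
lemma level_class_eigen: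
  assumes eig: "eigen_on E {..<n} lam f"
    and lower: "\<And>u. u < n \<Longrightarrow> eta u < j \<Longrightarrow> f u = 0"
    and nonlevel: "\<And>u. u < n \<Longrightarrow> eta u = j \<Longrightarrow> \<not> level n E eta u \<Longrightarrow> f u = 0"
  shows "eigen_on E (level_class n E eta j) lam f"
  unfolding eigen_on_def
proof
  let ?L = "level_class n E eta j"
  fix v assume "v \<in> ?L"
  hence v: "v < n" "level n E eta v" "eta v = j" unfolding level_class_def by auto
  have "(\<Sum>u | u \<in> ?L \<and> E v u. f u) = (\<Sum>u | u \<in> {..<n} \<and> E v u. f u)"
  proof (rule sum.mono_neutral_left)
    show "\<forall>u\<in>{u. u \<in> {..<n} \<and> E v u} - {u. u \<in> ?L \<and> E v u}. f u = 0"
    proof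
      fix u assume u: "u \<in> {u. u \<in> {..<n} \<and> E v u} - {u. u \<in> ?L \<and> E v u}"
      hence "eta u \<le> j" using v unfolding level_def by auto
      thus "f u = 0" using u lower nonlevel unfolding level_class_def by fastforce
    qed
  qed (auto simp: level_class_def)
  also have "\<dots> = lam * f v" using eig v(1) unfolding eigen_on_def by simp
  finally show "(\<Sum>u | u \<in> ?L \<and> E v u. f u) = lam * f v" .
qed

lemma eigenfunction_vanishes:
  assumes sym: "\<And>u v. u < n \<Longrightarrow> v < n \<Longrightarrow> E u v = E v u"
    and eig: "eigen_on E {..<n} lam f"
    and bad: "\<And>v. v < n \<Longrightarrow> bad n E eta v \<Longrightarrow> f v = 0"
    and level: "\<And>j. eigen_on E (level_class n E eta j) lam f \<Longrightarrow> \<forall>v\<in>level_class n E eta j. f v = 0"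
  shows "\<forall>v<n. f v = 0"
proof (rule label_induct[where eta = eta])
  fix j assume lower: "\<forall>u<n. eta u < j \<longrightarrow> f u = 0"
  have nonlevel: "f u = 0" if u: "u < n" "eta u = j" "\<not> level n E eta u" for u
  proof (cases "prodigy n E eta u")
    case True
    thus ?thesis using prodigy_vanishes[OF sym eig u(1) True] lower u(2) by blast
  next
    case False
    thus ?thesis using bad u unfolding bad_def by blast
  qed
  have "eigen_on E (level_class n E eta j) lam f"
    by (rule level_class_eigen[OF eig]) (use lower nonlevel in auto)
  hence "\<forall>v\<in>level_class n E eta j. f v = 0" by (rule level)
  thus "\<forall>u<n. eta u = j \<longrightarrow> f u = 0" using nonlevel unfolding level_class_def by blast
qed

section \<open>The multiplicity bound\<close>

lemma eigenvector_zero_if_orthogonal: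
  fixes x :: "real vec"
  assumes sym: "\<And>u v. u < n \<Longrightarrow> v < n \<Longrightarrow> E u v = E v u"
    and x: "x \<in> mat_kernel (char_matrix (adj_mat n E) lam)"
    and bad: "\<And>v. v < n \<Longrightarrow> bad n E eta v \<Longrightarrow> x $ v = 0"
    and basis: "\<And>j. kernel.basis (card (level_class n E eta j))
                  (char_matrix (induced_adj_mat E (level_class n E eta j)) lam) (B j)"
    and orth: "\<And>j w. w \<in> B j \<Longrightarrow> w \<bullet> restrict_vec (level_class n E eta j) x = 0"
  shows "x = 0\<^sub>v n"
proof -
  have xc: "x \<in> carrier_vec n" and eig: "eigen_on E {..<n} lam (($) x)"
    using adj_mat_kernel_eigen_on[OF x] by auto
  have "\<forall>v<n. x $ v = 0"
  proof (rule eigenfunction_vanishes[OF sym eig bad])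
    fix j
    let ?L = "level_class n E eta j"
    have C: "char_matrix (induced_adj_mat E ?L) lam \<in> carrier_mat (card ?L) (card ?L)"
      using induced_adj_mat_carrier[OF finite_level_class] by simp
    assume "eigen_on E ?L lam (($) x)"
    hence "restrict_vec ?L x \<in> mat_kernel (char_matrix (induced_adj_mat E ?L) lam)"
      by (simp add: restrict_vec_in_induced_kernel[OF finite_level_class])
    moreover have "\<forall>w\<in>B j. w \<bullet> restrict_vec ?L x = 0" using orth by simp
    ultimately have "restrict_vec ?L x = 0\<^sub>v (card ?L)"
      by (rule orthogonal_to_kernel_basis[OF C basis])
    thus "\<forall>v\<in>?L. x $ v = 0" by (simp add: restrict_vec_eq_0_iff[OF finite_level_class])
  qed
  thus ?thesis using xc by (intro eq_vecI) auto
qed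

lemma level_class_eigenspace_bases:
  assumes sym: "\<And>u v. u < n \<Longrightarrow> v < n \<Longrightarrow> E u v = E v u"
  shows "\<exists>B. \<forall>j. finite (B j) \<and> B j \<subseteq> carrier_vec (card (level_class n E eta j))
    \<and> kernel.basis (card (level_class n E eta j))
        (char_matrix (induced_adj_mat E (level_class n E eta j)) lam) (B j)
    \<and> card (B j) = eig_mult (induced_adj_mat E (level_class n E eta j)) lam"
proof -
  let ?L = "level_class n E eta"
  define C where "C j = char_matrix (induced_adj_mat E (?L j)) lam" for j
  have C: "C j \<in> carrier_mat (card (?L j)) (card (?L j))" for j
    unfolding C_def using induced_adj_mat_carrier[OF finite_level_class] by simp
  have "\<forall>j. \<exists>Bj. finite Bj \<and> kernel.basis (card (?L j)) (C j) Bj"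
    using kernel_basis_exists[OF C] by blast
  from choice[OF this] obtain B where B: "\<And>j. finite (B j) \<and> kernel.basis (card (?L j)) (C j) (B j)"
    by blast
  have props: "B j \<subseteq> carrier_vec (card (?L j)) \<and> card (B j) = eig_mult (induced_adj_mat E (?L j)) lam" for j
  proof -
    interpret K: kernel "card (?L j)" "card (?L j)" "C j" by unfold_locales (rule C)
    have "\<And>u v. u \<in> ?L j \<Longrightarrow> v \<in> ?L j \<Longrightarrow> E u v = E v u"
      using sym unfolding level_class_def by simp
    hence "eig_mult (induced_adj_mat E (?L j)) lam = kernel_dim (C j)"
      unfolding C_def by (rule eig_mult_induced_eq_kernel_dim[OF finite_level_class])
    moreover have "card (B j) = kernel_dim (C j)" using K.Ker.dim_basis[of "B j"] B[of j] by simp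
    moreover have "B j \<subseteq> carrier_vec (card (?L j))"
      using B[of j] mat_kernel_carrier[OF C] unfolding K.Ker.basis_def by blast
    ultimately show ?thesis by simp
  qed
  show ?thesis
  proof (intro exI allI conjI)
    fix j
    show "finite (B j)" using B[of j] by (rule conjunct1)
    show "B j \<subseteq> carrier_vec (card (?L j))" using props[of j] by (rule conjunct1)
    show "kernel.basis (card (?L j)) (char_matrix (induced_adj_mat E (?L j)) lam) (B j)"
      using B[of j] unfolding C_def by (rule conjunct2)
    show "card (B j) = eig_mult (induced_adj_mat E (?L j)) lam" using props[of j] by (rule conjunct2)
  qed
qed

text \<open>The unit vectors of the bad vertices together with the
  eigenspace bases of all level classes, extended by zero, form a family separating the
  \<open>lam\<close>-eigenspace of the graph.\<close>
lemma eig_mult_le_bad_plus_levels: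
  assumes sym: "\<And>u v. u < n \<Longrightarrow> v < n \<Longrightarrow> E u v = E v u"
  shows "eig_mult (adj_mat n E) lam \<le> card {v. v < n \<and> bad n E eta v} +
    (\<Sum>j \<in> eta ` {0..<n}. eig_mult (induced_adj_mat E (level_class n E eta j)) lam)"
proof -
  let ?L = "level_class n E eta"
  from level_class_eigenspace_bases[OF sym] obtain B where B: "\<forall>j. finite (B j)
      \<and> B j \<subseteq> carrier_vec (card (?L j))
      \<and> kernel.basis (card (?L j)) (char_matrix (induced_adj_mat E (?L j)) lam) (B j)
      \<and> card (B j) = eig_mult (induced_adj_mat E (?L j)) lam" ..
  hence fin_B: "finite (B j)" and B_carrier: "B j \<subseteq> carrier_vec (card (?L j))"
    and basis: "kernel.basis (card (?L j)) (char_matrix (induced_adj_mat E (?L j)) lam) (B j)"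
    and card_B: "card (B j) = eig_mult (induced_adj_mat E (?L j)) lam" for j
    by simp_all
  define Bad where "Bad = {v. v < n \<and> bad n E eta v}"
  define Ps where "Ps = unit_vec n ` Bad \<union> (\<Union>j \<in> eta ` {0..<n}. extend_vec n (?L j) ` B j)"
  have card_Ps: "card Ps \<le> card Bad + (\<Sum>j \<in> eta ` {0..<n}. card (B j))"
  proof -
    have "card Ps \<le> card (unit_vec n ` Bad :: real vec set) +
        card (\<Union>j \<in> eta ` {0..<n}. extend_vec n (?L j) ` B j)"
      unfolding Ps_def by (rule card_Un_le)
    moreover have "card (unit_vec n ` Bad :: real vec set) \<le> card Bad"
      by (rule card_image_le) (simp add: Bad_def)
    moreover have "card (\<Union>j \<in> eta ` {0..<n}. extend_vec n (?L j) ` B j) \<le> (\<Sum>j \<in> eta ` {0..<n}. card (B j))"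
      using fin_B by (intro order_trans[OF card_UN_le sum_mono]) (auto intro!: card_image_le)
    ultimately show ?thesis by linarith
  qed
  have "kernel_dim (char_matrix (adj_mat n E) lam) \<le> card Ps"
  proof (rule kernel_dim_le_separating)
    show "char_matrix (adj_mat n E) lam \<in> carrier_mat n n" unfolding adj_mat_def by simp
    show "finite Ps" unfolding Ps_def Bad_def using fin_B by auto
    show "Ps \<subseteq> carrier_vec n" unfolding Ps_def extend_vec_def by auto
    fix x assume x: "x \<in> mat_kernel (char_matrix (adj_mat n E) lam)" and orth: "\<forall>p\<in>Ps. p \<bullet> x = 0"
    have xc: "x \<in> carrier_vec n" using adj_mat_kernel_eigen_on(1)[OF x] .
    show "x = 0\<^sub>v n"
    proof (rule eigenvector_zero_if_orthogonal[OF sym x _ basis])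
      fix v assume "v < n" and "bad n E eta v"
      hence "unit_vec n v \<in> Ps" unfolding Ps_def Bad_def by blast
      thus "x $ v = 0" using orth scalar_prod_left_unit[OF xc \<open>v < n\<close>] by simp
    next
      fix j w assume w: "w \<in> B j"
      hence wc: "w \<in> carrier_vec (card (?L j))" using B_carrier by blast
      show "w \<bullet> restrict_vec (?L j) x = 0"
      proof (cases "j \<in> eta ` {0..<n}")
        case True
        hence "extend_vec n (?L j) w \<in> Ps" unfolding Ps_def using w by blast
        thus ?thesis using orth extend_vec_scalar_prod[OF level_class_subset wc xc] by simp
      next
        case False
        hence "?L j = {}" unfolding level_class_def by auto
        thus ?thesis using wc by (simp add: scalar_prod_def)
      qed
    qed
  qed
  moreover have "eig_mult (adj_mat n E) lam = kernel_dim (char_matrix (adj_mat n E) lam)"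
    unfolding adj_mat_as_induced by (rule eig_mult_induced_eq_kernel_dim) (use sym in auto)
  ultimately show ?thesis using card_Ps card_B unfolding Bad_def by simp
qed

lemma sum_order_le_degree:
  fixes p :: "'a :: field poly"
  assumes p: "p \<noteq> 0" and X: "finite X"
  shows "(\<Sum>a\<in>X. Polynomial.order a p) \<le> degree p"
proof -
  define R where "R = {a. poly p a = 0}"
  have R: "finite R" unfolding R_def using poly_roots_finite[OF p] .
  have "(\<Sum>a\<in>X. Polynomial.order a p) = (\<Sum>a\<in>X \<inter> R. Polynomial.order a p)"
    by (rule sum.mono_neutral_right) (use X p in \<open>auto simp: R_def order_root\<close>)
  also have "\<dots> \<le> (\<Sum>a\<in>R. Polynomial.order a p)" by (rule sum_mono2[OF R]) auto
  also have "\<dots> \<le> degree p" unfolding R_def by (rule order_sum_degree[OF p])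
  finally show ?thesis .
qed

lemma sum_eig_mult_le_card:
  assumes "finite X" and "finite S"
  shows "(\<Sum>mu\<in>X. eig_mult (induced_adj_mat E S) mu) \<le> card S"
proof -
  let ?p = "char_poly (induced_adj_mat E S)"
  have "monic ?p" and deg: "degree ?p = card S"
    using degree_monic_char_poly[OF induced_adj_mat_carrier[OF assms(2)]] by auto
  hence "?p \<noteq> 0" by auto
  from sum_order_le_degree[OF this assms(1)] show ?thesis unfolding eig_mult_def deg .
qed

lemma sum_card_level_classes:
  "(\<Sum>j \<in> eta ` {0..<n}. card (level_class n E eta j)) = card {v. v < n \<and> level n E eta v}"
proof -
  have "{v. v < n \<and> level n E eta v} = (\<Union>j \<in> eta ` {0..<n}. level_class n E eta j)"
    unfolding level_class_def by auto
  moreover have "card (\<Union>j \<in> eta ` {0..<n}. level_class n E eta j) =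
      (\<Sum>j \<in> eta ` {0..<n}. card (level_class n E eta j))"
    by (rule card_UN_disjoint) (auto simp: level_class_def)
  ultimately show ?thesis by simp
qed

text \<open>The second claim sums the first over the eigenvalues in \<open>Lams\<close>:
  \<open>\<Sum>\<^sub>\<mu> m\<^sub>\<mu> \<le> k b + \<Sum>\<^sub>j \<Sum>\<^sub>\<mu> \<ell>\<^sub>j(\<mu>) \<le> k b + \<Sum>\<^sub>j |L\<^sub>j| = k b + \<ell>\<close>.\<close>
theorem theorem2p1:
  fixes n :: nat and E :: "nat \<Rightarrow> nat \<Rightarrow> bool" and eta :: "nat \<Rightarrow> int"
    and lam :: real and Lams :: "real set"
  assumes sym: "\<And>u v. u < n \<Longrightarrow> v < n \<Longrightarrow> E u v = E v u"
    and irrefl: "\<And>v. v < n \<Longrightarrow> \<not> E v v"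
  defines "A \<equiv> adj_mat n E"
    and "b \<equiv> card {v. v < n \<and> bad n E eta v}"
    and "l \<equiv> card {v. v < n \<and> level n E eta v}"
  shows "eig_mult A lam \<le> b + (\<Sum>j \<in> eta ` {0..<n}. eig_mult (induced_adj_mat E (level_class n E eta j)) lam)
     \<and> (finite Lams \<and> (\<forall>\<mu>\<in>Lams. eigenvalue A \<mu>) \<longrightarrow>
         (\<Sum>\<mu>\<in>Lams. eig_mult A \<mu>) \<le> card Lams * b + l)"
proof -
  let ?m = "\<lambda>j mu. eig_mult (induced_adj_mat E (level_class n E eta j)) mu"
  have single: "eig_mult A mu \<le> b + (\<Sum>j \<in> eta ` {0..<n}. ?m j mu)" for mu
    unfolding A_def b_def by (rule eig_mult_le_bad_plus_levels[OF sym])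
  have "(\<Sum>\<mu>\<in>Lams. eig_mult A \<mu>) \<le> card Lams * b + l" if fin: "finite Lams"
  proof -
    have "(\<Sum>\<mu>\<in>Lams. eig_mult A \<mu>) \<le> (\<Sum>\<mu>\<in>Lams. b + (\<Sum>j \<in> eta ` {0..<n}. ?m j \<mu>))"
      by (rule sum_mono) (rule single)
    also have "\<dots> = card Lams * b + (\<Sum>j \<in> eta ` {0..<n}. \<Sum>\<mu>\<in>Lams. ?m j \<mu>)"
      by (simp add: sum.distrib sum.swap[of _ Lams])
    also have "\<dots> \<le> card Lams * b + (\<Sum>j \<in> eta ` {0..<n}. card (level_class n E eta j))"
      using fin finite_level_class by (intro add_left_mono sum_mono sum_eig_mult_le_card)
    also have "\<dots> = card Lams * b + l" unfolding l_def sum_card_level_classes ..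
    finally show ?thesis .
  qed
  thus ?thesis using single by blast
qed

end
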